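(* Let $r\geq 2$ and let $A$ be a complex $r$-matrix of order $n_1\times\cdots\times n_r$, with slices $A^{(k)}_s$ ($k\in[r]$, $s\in[n_k]$). Then \[ \|A\|_r^r\leq \max_{a_{i_1,\ldots,i_r}\neq 0}\,|A^{(1)}_{i_1}|_1\cdots|A^{(r)}_{i_r}|_1 , \] where the maximum is over all index tuples $(i_1,\ldots,i_r)\in[n_1]\times\cdots\times[n_r]$ with $a_{i_1,\ldots,i_r}\neq 0$.
   Context: An $r$-matrix $A$ of order $n_1\times\cdots\times n_r$ is a function on $[n_1]\times\cdots\times[n_r]$, with values $a_{i_1,\ldots,i_r}$. For $k\in[r]$ and $s\in[n_k]$, the slice $A^{(k)}_s$ is the $(r-1)$-matrix obtained from $A$ by fixing $i_k=s$; $|A^{(k)}_s|_1$ denotes the sum of the absolute values of its entries. The linear form of $A$ is $L_A(\mathbf{x}^{(1)},\ldots,\mathbf{x}^{(r)})=\sum_{i_1,\ldots,i_r}a_{i_1,\ldots,i_r}\overline{x^{(1)}_{i_1}}\cdots\overline{x^{(r)}_{i_r}}$ for $\mathbf{x}^{(k)}\in\mathbb{C}^{n_k}$. For real $p\geq1$, the spectral $p$-norm is $\|A\|_p=\max\{|L_A(\mathbf{x}^{(1)},\ldots,\mathbf{x}^{(r)})| : |\mathbf{x}^{(1)}|_p=\cdots=|\mathbf{x}^{(r)}|_p=1\}$, where $|\cdot|_p$ is the usual $\ell^p$ norm of a complex vector. *)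

theory Defs
  imports "HOL-Analysis.Analysis"
begin

text \<open>An r-matrix of order n_0 x ... x n_(r-1) (0-based indices) is a function
  A :: (nat \<Rightarrow> nat) \<Rightarrow> complex on the index tuples below; values outside are irrelevant.\<close>

definition idx :: "nat \<Rightarrow> (nat \<Rightarrow> nat) \<Rightarrow> (nat \<Rightarrow> nat) set" where
  "idx r n = PiE {..<r} (\<lambda>k. {..<n k})"

definition lpnorm :: "real \<Rightarrow> nat \<Rightarrow> (nat \<Rightarrow> complex) \<Rightarrow> real" where
  "lpnorm p m v = (\<Sum>j<m. cmod (v j) powr p) powr (1 / p)"

definition linform :: "nat \<Rightarrow> (nat \<Rightarrow> nat) \<Rightarrow> ((nat \<Rightarrow> nat) \<Rightarrow> complex)
    \<Rightarrow> (nat \<Rightarrow> nat \<Rightarrow> complex) \<Rightarrow> complex" where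
  "linform r n A x = (\<Sum>i\<in>idx r n. A i * (\<Prod>k<r. cnj (x k (i k))))"

definition spec_norm :: "real \<Rightarrow> nat \<Rightarrow> (nat \<Rightarrow> nat) \<Rightarrow> ((nat \<Rightarrow> nat) \<Rightarrow> complex) \<Rightarrow> real" where
  "spec_norm p r n A =
     Sup {cmod (linform r n A x) | x. \<forall>k<r. lpnorm p (n k) (x k) = 1}"

definition slice_norm :: "nat \<Rightarrow> (nat \<Rightarrow> nat) \<Rightarrow> ((nat \<Rightarrow> nat) \<Rightarrow> complex) \<Rightarrow> nat \<Rightarrow> nat \<Rightarrow> real" where
  "slice_norm r n A k s = (\<Sum>i\<in>{i \<in> idx r n. i k = s}. cmod (A i))"

end

theory Submission
  imports Defs
begin

(* Let M be the maximum on the right. Fix unit vectors x_1, ..., x_r in l^r and an entry i with a_i ~= 0; put s_k = |A^(k)_(i_k)|_1,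
   which is >= |a_i| > 0, so that s_1 ... s_r <= M. AM-GM applied to the numbers
   |x_k(i_k)| / s_k^(1/r) gives
     |x_1(i_1)| ... |x_r(i_r)| <= M^(1/r) / r * sum_k |x_k(i_k)|^r / s_k.
   Multiply by |a_i| and sum over i. In the k-th term group the entries by their k-th index t:
   the weights |a_i| add up to |A^(k)_t|_1, which cancels the denominator and leaves at most
   sum_t |x_k(t)|^r = 1. Hence |L_A(x_1, ..., x_r)| <= M^(1/r). *)

lemma prod_le_mean_power:
  fixes z :: "nat \<Rightarrow> real"
  assumes "r > 0" "\<And>k. k < r \<Longrightarrow> z k \<ge> 0"
  shows "(\<Prod>k<r. z k) \<le> (\<Sum>k<r. z k ^ r) / r"
proof -
  have nonneg: "(\<Prod>k<r. z k) \<ge> 0" using assms by (intro prod_nonneg) auto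
  have "(\<Prod>k<r. z k) = ((\<Prod>k<r. z k) ^ r) powr (1 / r)"
    using nonneg assms by (simp add: powr_realpow'[symmetric] powr_powr)
  also have "\<dots> = (\<Prod>k<r. z k ^ r) powr (1 / card {..<r})"
    by (simp add: prod_power_distrib)
  also have "\<dots> \<le> (\<Sum>k<r. z k ^ r / card {..<r})"
    by (rule arith_geom_mean) (use assms in auto)
  finally show ?thesis by (simp add: sum_divide_distrib)
qed

lemma prod_le_weighted_mean_power:
  fixes y s :: "nat \<Rightarrow> real"
  assumes r: "r > 0" and y: "\<And>k. k < r \<Longrightarrow> y k \<ge> 0" and s: "\<And>k. k < r \<Longrightarrow> s k > 0"
  shows "(\<Prod>k<r. y k) \<le> (\<Prod>k<r. s k) powr (1 / r) / r * (\<Sum>k<r. y k ^ r / s k)"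
proof -
  define z where "z k = y k / s k powr (1 / r)" for k
  have "(\<Prod>k<r. y k) = (\<Prod>k<r. s k powr (1 / r) * z k)"
  proof (rule prod.cong)
    fix k assume "k \<in> {..<r}"
    then have "s k powr (1 / r) > 0" using s[of k] by simp
    then show "y k = s k powr (1 / r) * z k" by (simp add: z_def)
  qed simp
  also have "\<dots> = (\<Prod>k<r. s k) powr (1 / r) * (\<Prod>k<r. z k)"
    using s by (simp add: prod.distrib prod_powr_distrib less_imp_le)
  also have "(\<Prod>k<r. z k) \<le> (\<Sum>k<r. z k ^ r) / r"
    using r y s by (intro prod_le_mean_power) (auto simp: z_def)
  also have "(\<Sum>k<r. z k ^ r) = (\<Sum>k<r. y k ^ r / s k)"
  proof (rule sum.cong)
    fix k assume "k \<in> {..<r}"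
    then have "(s k powr (1 / r)) ^ r = s k"
      using r s[of k] by (simp add: root_powr_inverse[symmetric])
    then show "z k ^ r = y k ^ r / s k" by (simp add: z_def power_divide)
  qed simp
  finally show ?thesis by (simp add: mult_left_mono)
qed

lemma sum_power_eq_one_if_lpnorm_eq_one:
  fixes p :: nat and v :: "nat \<Rightarrow> complex"
  assumes "p > 0" "lpnorm (real p) m v = 1"
  shows "(\<Sum>j<m. cmod (v j) ^ p) = 1"
proof -
  let ?S = "\<Sum>j<m. cmod (v j) powr real p"
  have "(?S powr (1 / real p)) powr real p = 1" using assms unfolding lpnorm_def by simp
  then have "?S = 1" using assms by (simp add: powr_powr sum_nonneg)
  then show ?thesis using assms by (simp add: powr_realpow')
qed

lemma lpnorm_unit_vector:
  assumes "p > 0" "m > 0"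
  shows "lpnorm p m (\<lambda>t. if t = 0 then 1 else 0) = 1"
proof -
  have "(\<Sum>j<m. cmod (if j = 0 then 1 else 0 :: complex) powr p) = (\<Sum>j<m. if j = 0 then 1 else 0)"
    using assms by (intro sum.cong) auto
  also have "\<dots> = 1" using assms by simp
  finally show ?thesis unfolding lpnorm_def by simp
qed

lemma finite_idx: "finite (idx r n)"
  unfolding idx_def by (simp add: finite_PiE)

lemma cmod_le_slice_norm:
  assumes "i \<in> idx r n"
  shows "cmod (A i) \<le> slice_norm r n A k (i k)"
  unfolding slice_norm_def using assms finite_idx by (intro member_le_sum) auto

lemma sum_idx_group_by_slice:
  assumes "k < r"
  shows "(\<Sum>i\<in>idx r n. cmod (A i) * f (i k)) = (\<Sum>t<n k. slice_norm r n A k t * f t)"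
proof -
  have "(\<lambda>i. i k) ` idx r n \<subseteq> {..<n k}" using assms unfolding idx_def by auto
  then have "(\<Sum>i\<in>idx r n. cmod (A i) * f (i k))
      = (\<Sum>t<n k. \<Sum>i\<in>{i \<in> idx r n. i k = t}. cmod (A i) * f (i k))"
    by (intro sum.group[symmetric] finite_idx) auto
  also have "\<dots> = (\<Sum>t<n k. \<Sum>i\<in>{i \<in> idx r n. i k = t}. cmod (A i) * f t)"
    by (intro sum.cong) auto
  finally show ?thesis by (simp add: slice_norm_def sum_distrib_right)
qed

lemma sum_idx_div_slice_norm_le:
  assumes "k < r" "\<And>t. g t \<ge> 0"
  shows "(\<Sum>i\<in>idx r n. cmod (A i) * (g (i k) / slice_norm r n A k (i k))) \<le> (\<Sum>t<n k. g t)"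
proof -
  have "(\<Sum>i\<in>idx r n. cmod (A i) * (g (i k) / slice_norm r n A k (i k)))
      = (\<Sum>t<n k. slice_norm r n A k t * (g t / slice_norm r n A k t))"
    using assms(1) by (rule sum_idx_group_by_slice)
  also have "\<dots> \<le> (\<Sum>t<n k. g t)"
    using assms(2) by (intro sum_mono) (simp add: divide_simps)
  finally show ?thesis .
qed

lemma cmod_linform_le_sum:
  "cmod (linform r n A x) \<le> (\<Sum>i\<in>idx r n. cmod (A i) * (\<Prod>k<r. cmod (x k (i k))))"
  unfolding linform_def
  by (rule order_trans[OF norm_sum]) (simp add: norm_mult flip: prod_norm)

lemma cmod_linform_le_powr_slice_bound:
  assumes r: "r > 0"
    and unit: "\<forall>k<r. lpnorm (real r) (n k) (x k) = 1"
    and M: "\<And>i. i \<in> idx r n \<Longrightarrow> A i \<noteq> 0 \<Longrightarrow> (\<Prod>k<r. slice_norm r n A k (i k)) \<le> M"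
  shows "cmod (linform r n A x) \<le> M powr (1 / r)"
proof -
  define s where "s = slice_norm r n A"
  define y where "y k t = cmod (x k t)" for k t
  define c where "c = M powr (1 / r) / r"
  have termwise: "cmod (A i) * (\<Prod>k<r. y k (i k))
      \<le> c * (cmod (A i) * (\<Sum>k<r. y k (i k) ^ r / s k (i k)))"
    if i: "i \<in> idx r n" for i
  proof (cases "A i = 0")
    case False
    have s_pos: "s k (i k) > 0" for k
      using cmod_le_slice_norm[OF i, of A k] False unfolding s_def
      by (metis less_le_trans zero_less_norm_iff)
    have "(\<Prod>k<r. y k (i k)) \<le> (\<Prod>k<r. s k (i k)) powr (1 / r) / r * (\<Sum>k<r. y k (i k) ^ r / s k (i k))"
      using r s_pos by (intro prod_le_weighted_mean_power) (auto simp: y_def)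
    also have "\<dots> \<le> c * (\<Sum>k<r. y k (i k) ^ r / s k (i k))"
      unfolding c_def using M[OF i False] s_pos
      by (intro mult_right_mono divide_right_mono powr_mono2 sum_nonneg prod_nonneg)
        (auto simp: s_def y_def less_imp_le)
    finally have "cmod (A i) * (\<Prod>k<r. y k (i k))
        \<le> cmod (A i) * (c * (\<Sum>k<r. y k (i k) ^ r / s k (i k)))"
      by (rule mult_left_mono) simp
    then show ?thesis by (simp add: mult.left_commute)
  qed simp
  have collapse: "(\<Sum>i\<in>idx r n. cmod (A i) * (\<Sum>k<r. y k (i k) ^ r / s k (i k))) \<le> r"
  proof -
    have "(\<Sum>i\<in>idx r n. cmod (A i) * (\<Sum>k<r. y k (i k) ^ r / s k (i k)))
        = (\<Sum>k<r. \<Sum>i\<in>idx r n. cmod (A i) * (y k (i k) ^ r / s k (i k)))"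
      by (simp add: sum_distrib_left sum.swap[of _ "idx r n"])
    also have "\<dots> \<le> (\<Sum>k<r. \<Sum>t<n k. y k t ^ r)"
      unfolding s_def by (intro sum_mono sum_idx_div_slice_norm_le) (auto simp: y_def)
    also have "\<dots> = r"
      using unit r by (simp add: y_def sum_power_eq_one_if_lpnorm_eq_one)
    finally show ?thesis .
  qed
  have "cmod (linform r n A x) \<le> (\<Sum>i\<in>idx r n. cmod (A i) * (\<Prod>k<r. y k (i k)))"
    unfolding y_def by (rule cmod_linform_le_sum)
  also have "\<dots> \<le> c * (\<Sum>i\<in>idx r n. cmod (A i) * (\<Sum>k<r. y k (i k) ^ r / s k (i k)))"
    using termwise by (simp add: sum_distrib_left sum_mono)
  also have "\<dots> \<le> c * r"
    using collapse by (intro mult_left_mono) (simp_all add: c_def)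
  also have "\<dots> = M powr (1 / r)"
    using r by (simp add: c_def)
  finally show ?thesis .
qed

lemma spec_norm_le:
  assumes p: "p > 0" and n: "\<forall>k<r. n k \<ge> 1"
    and bound: "\<And>x. \<forall>k<r. lpnorm p (n k) (x k) = 1 \<Longrightarrow> cmod (linform r n A x) \<le> B"
  shows "spec_norm p r n A \<le> B"
proof -
  let ?e = "\<lambda>k t. if t = 0 then 1 else 0 :: complex"
  have "\<forall>k<r. lpnorm p (n k) (?e k) = 1"
    using p n by (auto intro!: lpnorm_unit_vector simp: Suc_le_eq)
  then show ?thesis
    unfolding spec_norm_def using bound by (intro cSup_least) auto
qed

lemma spec_norm_nonneg:
  assumes p: "p > 0" and n: "\<forall>k<r. n k \<ge> 1"
    and bound: "\<And>x. \<forall>k<r. lpnorm p (n k) (x k) = 1 \<Longrightarrow> cmod (linform r n A x) \<le> B"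
  shows "spec_norm p r n A \<ge> 0"
proof -
  let ?e = "\<lambda>k t. if t = 0 then 1 else 0 :: complex"
  have "\<forall>k<r. lpnorm p (n k) (?e k) = 1"
    using p n by (auto intro!: lpnorm_unit_vector simp: Suc_le_eq)
  then have "cmod (linform r n A ?e) \<le> spec_norm p r n A"
    unfolding spec_norm_def using bound by (intro cSup_upper) (auto simp: bdd_above_def)
  then show ?thesis by (meson norm_ge_zero order_trans)
qed

theorem theorem1:
  fixes r :: nat and n :: "nat \<Rightarrow> nat" and A :: "(nat \<Rightarrow> nat) \<Rightarrow> complex"
  assumes "r \<ge> 2" and "\<forall>k<r. n k \<ge> 1"
  shows "spec_norm (real r) r n A ^ r \<le>
    Max (insert 0 {(\<Prod>k<r. slice_norm r n A k (i k)) | i. i \<in> idx r n \<and> A i \<noteq> 0})"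
proof -
  define M where "M = Max (insert 0 {(\<Prod>k<r. slice_norm r n A k (i k)) | i. i \<in> idx r n \<and> A i \<noteq> 0})"
  have finite: "finite {(\<Prod>k<r. slice_norm r n A k (i k)) | i. i \<in> idx r n \<and> A i \<noteq> 0}"
    using finite_idx by (auto intro: finite_surj[of "idx r n"])
  have "M \<ge> 0" unfolding M_def using finite by simp
  have bound: "cmod (linform r n A x) \<le> M powr (1 / r)"
    if "\<forall>k<r. lpnorm (real r) (n k) (x k) = 1" for x
    using assms(1) that
    by (intro cmod_linform_le_powr_slice_bound) (auto simp: M_def finite intro!: Max_ge)
  have "spec_norm (real r) r n A ^ r \<le> (M powr (1 / r)) ^ r"
    using assms bound by (intro power_mono spec_norm_le spec_norm_nonneg) auto
  also have "\<dots> = M"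
    using assms(1) \<open>M \<ge> 0\<close> by (simp add: root_powr_inverse[symmetric])
  finally show ?thesis unfolding M_def .
qed

end
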